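(* Suppose that there exists a countably infinite partition of $\Omega$ into measurable sets of strictly positive probability. Let $E$ be a free $L^0$-module. Then $E$ is stable if and only if $E$ has finite rank.
   Context: $(\Omega,\mathcal F,\mathbb P)$ is a probability space and $L^0=L^0(\Omega,\mathcal F,\mathbb P)$ is the commutative ring of real-valued measurable functions modulo $\mathbb P$-a.e. equality; measurable sets are identified when they differ by a null set. An $L^0$-module $E$ is called stable if for every countable measurable partition $(A_k)$ of $\Omega$ and every sequence $(x_k)$ in $E$ there exists a unique $x\in E$ with $1_{A_k}x=1_{A_k}x_k$ for all $k$. A free $L^0$-module has a well-defined rank (cardinality of a basis), since $L^0$ is commutative. *)

theory Defs
  imports "HOL-Probability.Probability" "HOL-Algebra.Module"
begin

definition L0_class :: "'a measure \<Rightarrow> ('a \<Rightarrow> real) \<Rightarrow> ('a \<Rightarrow> real) set" where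
  "L0_class M f = {g \<in> borel_measurable M. AE x in M. g x = f x}"

definition L0_rep :: "('a \<Rightarrow> real) set \<Rightarrow> 'a \<Rightarrow> real" where
  "L0_rep X = (SOME f. f \<in> X)"

definition L0 :: "'a measure \<Rightarrow> ('a \<Rightarrow> real) set ring" where
  "L0 M = \<lparr> carrier = L0_class M ` borel_measurable M,
            monoid.mult = (\<lambda>X Y. L0_class M (\<lambda>x. L0_rep X x * L0_rep Y x)),
            one = L0_class M (\<lambda>_. 1),
            zero = L0_class M (\<lambda>_. 0),
            add = (\<lambda>X Y. L0_class M (\<lambda>x. L0_rep X x + L0_rep Y x)) \<rparr>"

definition L0_ind :: "'a measure \<Rightarrow> 'a set \<Rightarrow> ('a \<Rightarrow> real) set" where
  "L0_ind M A = L0_class M (indicator A)"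

definition lin_indep :: "('r, 'c) ring_scheme \<Rightarrow> ('r, 'e, 'd) module_scheme \<Rightarrow> 'e set \<Rightarrow> bool" where
  "lin_indep R E B \<longleftrightarrow>
     (\<forall>S a. finite S \<and> S \<subseteq> B \<and> a \<in> S \<rightarrow> carrier R \<and>
        finsum E (\<lambda>b. a b \<odot>\<^bsub>E\<^esub> b) S = \<zero>\<^bsub>E\<^esub> \<longrightarrow> (\<forall>b\<in>S. a b = \<zero>\<^bsub>R\<^esub>))"

definition spans :: "('r, 'c) ring_scheme \<Rightarrow> ('r, 'e, 'd) module_scheme \<Rightarrow> 'e set \<Rightarrow> bool" where
  "spans R E B \<longleftrightarrow>
     (\<forall>x\<in>carrier E. \<exists>S a. finite S \<and> S \<subseteq> B \<and> a \<in> S \<rightarrow> carrier R \<and>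
        x = finsum E (\<lambda>b. a b \<odot>\<^bsub>E\<^esub> b) S)"

definition is_basis :: "('r, 'c) ring_scheme \<Rightarrow> ('r, 'e, 'd) module_scheme \<Rightarrow> 'e set \<Rightarrow> bool" where
  "is_basis R E B \<longleftrightarrow> B \<subseteq> carrier E \<and> lin_indep R E B \<and> spans R E B"

definition free_module :: "('r, 'c) ring_scheme \<Rightarrow> ('r, 'e, 'd) module_scheme \<Rightarrow> bool" where
  "free_module R E \<longleftrightarrow> (\<exists>B. is_basis R E B)"

text \<open>Finite rank: the (well-defined) rank, i.e. the cardinality of a basis, is finite.\<close>
definition finite_rank :: "('r, 'c) ring_scheme \<Rightarrow> ('r, 'e, 'd) module_scheme \<Rightarrow> bool" where
  "finite_rank R E \<longleftrightarrow> (\<exists>B. is_basis R E B \<and> finite B)"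

definition meas_partition :: "'a measure \<Rightarrow> (nat \<Rightarrow> 'a set) \<Rightarrow> bool" where
  "meas_partition M A \<longleftrightarrow> (\<forall>k. A k \<in> sets M) \<and> disjoint_family A \<and> (\<Union>k. A k) = space M"

definition L0_stable :: "'a measure \<Rightarrow> (('a \<Rightarrow> real) set, 'e, 'd) module_scheme \<Rightarrow> bool" where
  "L0_stable M E \<longleftrightarrow>
     (\<forall>A x. meas_partition M A \<and> (\<forall>k. x k \<in> carrier E) \<longrightarrow>
        (\<exists>!y. y \<in> carrier E \<and>
           (\<forall>k. L0_ind M (A k) \<odot>\<^bsub>E\<^esub> y = L0_ind M (A k) \<odot>\<^bsub>E\<^esub> x k)))"

end

theory Submission
  imports Defs
begin

text \<open>
  L0 can be glued along a countable partition (A k): a sequence of coefficients c k is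
  patched into one element g with 1_(A k) g = 1_(A k) c k, and an element vanishing on
  every A k vanishes. With a finite basis, gluing the coordinates therefore makes E stable.
  Conversely, if a basis is infinite, choose distinct basis vectors b k and glue y with
  1_(A k) y = 1_(A k) b k. Being a finite combination of basis vectors, y misses some b k,
  and linear independence then forces 1_(A k) = 0, contradicting P(A k) > 0.
\<close>

lemma L0_class_cong: "AE x in M. f x = g x \<Longrightarrow> L0_class M f = L0_class M g"
  unfolding L0_class_def by (auto elim: AE_mp)

lemma L0_class_self: "f \<in> borel_measurable M \<Longrightarrow> f \<in> L0_class M f"
  unfolding L0_class_def by auto

lemma L0_rep_in_L0_class: "f \<in> borel_measurable M \<Longrightarrow> L0_rep (L0_class M f) \<in> L0_class M f"
  unfolding L0_rep_def using L0_class_self by (metis someI_ex)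

lemma L0_class_in_carrier: "f \<in> borel_measurable M \<Longrightarrow> L0_class M f \<in> carrier (L0 M)"
  by (simp add: L0_def)

lemma L0_carrier_rep:
  assumes "X \<in> carrier (L0 M)"
  shows "L0_rep X \<in> borel_measurable M" and "X = L0_class M (L0_rep X)"
proof -
  from assms obtain f where f: "f \<in> borel_measurable M" "X = L0_class M f"
    by (auto simp: L0_def)
  have rep: "L0_rep X \<in> L0_class M f"
    using L0_rep_in_L0_class[OF f(1)] f(2) by simp
  then show "L0_rep X \<in> borel_measurable M"
    by (simp add: L0_class_def)
  from rep have "AE x in M. f x = L0_rep X x"
    by (auto simp: L0_class_def elim: AE_mp)
  then show "X = L0_class M (L0_rep X)"
    using f(2) L0_class_cong by metis
qed

lemma AE_eq_if_L0_class_eq: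
  assumes "f \<in> borel_measurable M" "L0_class M f = L0_class M g"
  shows "AE x in M. f x = g x"
proof -
  have "f \<in> L0_class M g"
    using L0_class_self[OF assms(1)] assms(2) by simp
  then show ?thesis by (simp add: L0_class_def)
qed

lemma L0_zero: "\<zero>\<^bsub>L0 M\<^esub> = L0_class M (\<lambda>_. 0)"
  by (simp add: L0_def)

lemma L0_ind_in_carrier: "A \<in> sets M \<Longrightarrow> L0_ind M A \<in> carrier (L0 M)"
  unfolding L0_ind_def by (rule L0_class_in_carrier) simp

lemma L0_ind_mult:
  assumes "A \<in> sets M" "Y \<in> carrier (L0 M)"
  shows "L0_ind M A \<otimes>\<^bsub>L0 M\<^esub> Y = L0_class M (\<lambda>x. indicator A x * L0_rep Y x)"
proof -
  have "L0_rep (L0_ind M A) \<in> L0_class M (indicator A)"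
    unfolding L0_ind_def by (rule L0_rep_in_L0_class) (use assms in simp)
  then have "AE x in M. L0_rep (L0_ind M A) x * L0_rep Y x = indicator A x * L0_rep Y x"
    by (auto simp: L0_class_def elim: AE_mp)
  then show ?thesis
    by (simp add: L0_def L0_class_cong)
qed

lemma L0_ind_neq_zero:
  assumes "A \<in> sets M" "emeasure M A \<noteq> 0"
  shows "L0_ind M A \<noteq> \<zero>\<^bsub>L0 M\<^esub>"
proof
  assume "L0_ind M A = \<zero>\<^bsub>L0 M\<^esub>"
  then have "AE x in M. indicator A x = (0::real)"
    unfolding L0_zero L0_ind_def by (intro AE_eq_if_L0_class_eq) (use assms in auto)
  then have "AE x in M. x \<notin> A"
    by (auto elim: AE_mp simp: indicator_def split: if_splits)
  then have "emeasure M A = 0"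
    using AE_iff_measurable[of A M "\<lambda>x. x \<notin> A"] assms(1) sets.sets_into_space[OF assms(1)]
    by auto
  with assms(2) show False by simp
qed

lemma L0_countable_gluing:
  assumes A: "meas_partition M A" and c: "\<And>k. c k \<in> carrier (L0 M)"
  shows "\<exists>g\<in>carrier (L0 M). \<forall>k. L0_ind M (A k) \<otimes>\<^bsub>L0 M\<^esub> g = L0_ind M (A k) \<otimes>\<^bsub>L0 M\<^esub> c k"
proof -
  define r where "r k = L0_rep (c k)" for k
  have r_meas: "r k \<in> borel_measurable M" for k
    using L0_carrier_rep(1)[OF c] r_def by simp
  have A_sets: "A k \<in> sets M" for k
    using A by (simp add: meas_partition_def)
  define g where "g x = (\<Sum>k. indicator (A k) x * r k x)" for x
  have g_meas: "g \<in> borel_measurable M"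
    unfolding g_def using r_meas A_sets by measurable
  have g_on_A: "indicator (A k) x * g x = indicator (A k) x * r k x" for k x
  proof (cases "x \<in> A k")
    case True
    have "(\<lambda>j. indicator (A j) x * r j x) = (\<lambda>j. if j = k then indicator (A k) x * r k x else 0)"
    proof
      fix j
      show "indicator (A j) x * r j x = (if j = k then indicator (A k) x * r k x else 0)"
        using A True by (auto simp: meas_partition_def disjoint_family_on_def indicator_def)
    qed
    then have "g x = indicator (A k) x * r k x"
      unfolding g_def using sums_single[of k "\<lambda>_. indicator (A k) x * r k x"] sums_unique by metis
    then show ?thesis using True by simp
  qed simp
  have "AE x in M. L0_rep (L0_class M g) x = g x"
    using L0_rep_in_L0_class[OF g_meas] by (simp add: L0_class_def)
  then have "\<forall>k. L0_ind M (A k) \<otimes>\<^bsub>L0 M\<^esub> L0_class M g = L0_ind M (A k) \<otimes>\<^bsub>L0 M\<^esub> c k"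
    unfolding L0_ind_mult[OF A_sets L0_class_in_carrier[OF g_meas]] L0_ind_mult[OF A_sets c]
    by (auto intro!: L0_class_cong elim!: AE_mp simp: g_on_A r_def[symmetric])
  with L0_class_in_carrier[OF g_meas] show ?thesis by blast
qed

lemma L0_eq_zero_if_locally_zero:
  assumes A: "meas_partition M A" and d: "d \<in> carrier (L0 M)"
    and local_zero: "\<And>k. L0_ind M (A k) \<otimes>\<^bsub>L0 M\<^esub> d = \<zero>\<^bsub>L0 M\<^esub>"
  shows "d = \<zero>\<^bsub>L0 M\<^esub>"
proof -
  have A_sets: "A k \<in> sets M" for k
    using A by (simp add: meas_partition_def)
  have "AE x in M. indicator (A k) x * L0_rep d x = 0" for k
    using local_zero[of k] L0_carrier_rep(1)[OF d] A_sets
    unfolding L0_ind_mult[OF A_sets d] L0_zero by (intro AE_eq_if_L0_class_eq) auto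
  then have "\<forall>k. AE x in M. indicator (A k) x * L0_rep d x = 0"
    by blast
  then have "AE x in M. \<forall>k. indicator (A k) x * L0_rep d x = 0"
    unfolding AE_all_countable .
  then have "AE x in M. L0_rep d x = 0"
  proof (rule AE_mp, intro AE_I2 impI)
    fix x assume x: "x \<in> space M" and zero_on_A: "\<forall>k. indicator (A k) x * L0_rep d x = 0"
    obtain k where "x \<in> A k"
      using A x unfolding meas_partition_def by blast
    with zero_on_A[rule_format, of k] show "L0_rep d x = 0" by simp
  qed
  then have "L0_class M (L0_rep d) = L0_class M (\<lambda>_. 0)"
    by (rule L0_class_cong)
  then show ?thesis
    using L0_carrier_rep(2)[OF d] by (simp add: L0_zero)
qed

context module
begin

lemma spans_finite_coeffs:
  assumes "finite B" "B \<subseteq> carrier M" "spans R M B" "x \<in> carrier M"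
  shows "\<exists>a. a \<in> B \<rightarrow> carrier R \<and> x = (\<Oplus>\<^bsub>M\<^esub> b\<in>B. a b \<odot>\<^bsub>M\<^esub> b)"
proof -
  from assms(3,4) obtain S a where S: "finite S" "S \<subseteq> B" "a \<in> S \<rightarrow> carrier R"
    and x: "x = (\<Oplus>\<^bsub>M\<^esub> b\<in>S. a b \<odot>\<^bsub>M\<^esub> b)"
    unfolding spans_def by meson
  define a' where "a' b = (if b \<in> S then a b else \<zero>)" for b
  have a': "a' \<in> B \<rightarrow> carrier R"
    using S(3) unfolding a'_def by auto
  have "(\<Oplus>\<^bsub>M\<^esub> b\<in>S. a b \<odot>\<^bsub>M\<^esub> b) = (\<Oplus>\<^bsub>M\<^esub> b\<in>B. a' b \<odot>\<^bsub>M\<^esub> b)"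
  proof (rule M.add.finprod_mono_neutral_cong_left[OF assms(1) S(2)])
    show "(\<lambda>b. a' b \<odot>\<^bsub>M\<^esub> b) \<in> B \<rightarrow> carrier M"
      using a' assms(2) by (auto intro!: smult_closed)
  qed (use assms(2) in \<open>auto simp: a'_def\<close>)
  with x a' show ?thesis by blast
qed

lemma smult_finsum_lincomb:
  assumes "finite B" "B \<subseteq> carrier M" "a \<in> B \<rightarrow> carrier R" "u \<in> carrier R"
  shows "u \<odot>\<^bsub>M\<^esub> (\<Oplus>\<^bsub>M\<^esub> b\<in>B. a b \<odot>\<^bsub>M\<^esub> b) = (\<Oplus>\<^bsub>M\<^esub> b\<in>B. (u \<otimes> a b) \<odot>\<^bsub>M\<^esub> b)"
proof -
  have "u \<odot>\<^bsub>M\<^esub> (\<Oplus>\<^bsub>M\<^esub> b\<in>B. a b \<odot>\<^bsub>M\<^esub> b) = (\<Oplus>\<^bsub>M\<^esub> b\<in>B. u \<odot>\<^bsub>M\<^esub> (a b \<odot>\<^bsub>M\<^esub> b))"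
    by (rule finsum_smult_ldistr) (use assms in auto)
  also have "\<dots> = (\<Oplus>\<^bsub>M\<^esub> b\<in>B. (u \<otimes> a b) \<odot>\<^bsub>M\<^esub> b)"
    by (rule M.finsum_cong') (use assms in \<open>auto simp: smult_assoc1 Pi_iff subset_iff\<close>)
  finally show ?thesis .
qed

lemma lin_indep_coeff_eq_zero:
  assumes "lin_indep R M B" "finite S" "S \<subseteq> B" "a \<in> S \<rightarrow> carrier R"
    "(\<Oplus>\<^bsub>M\<^esub> b\<in>S. a b \<odot>\<^bsub>M\<^esub> b) = \<zero>\<^bsub>M\<^esub>" "b \<in> S"
  shows "a b = \<zero>"
  using assms unfolding lin_indep_def by blast

lemma lin_indep_smult_in_span_eq_zero:
  assumes li: "lin_indep R M B" and BM: "B \<subseteq> carrier M"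
    and S: "finite S" "S \<subseteq> B" "a \<in> S \<rightarrow> carrier R"
    and b: "b \<in> B" "b \<notin> S" and u: "u \<in> carrier R"
    and comb: "u \<odot>\<^bsub>M\<^esub> b = (\<Oplus>\<^bsub>M\<^esub> c\<in>S. a c \<odot>\<^bsub>M\<^esub> c)"
  shows "u = \<zero>"
proof -
  have SM: "S \<subseteq> carrier M" and bM: "b \<in> carrier M"
    using S(2) b(1) BM by auto
  define a' where "a' c = (if c = b then \<ominus> u else a c)" for c
  have a': "a' \<in> insert b S \<rightarrow> carrier R"
    using S(3) u by (auto simp: a'_def)
  have "(\<Oplus>\<^bsub>M\<^esub> c\<in>insert b S. a' c \<odot>\<^bsub>M\<^esub> c) = a' b \<odot>\<^bsub>M\<^esub> b \<oplus>\<^bsub>M\<^esub> (\<Oplus>\<^bsub>M\<^esub> c\<in>S. a' c \<odot>\<^bsub>M\<^esub> c)"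
    by (rule M.finsum_insert) (use S b a' SM bM in \<open>auto intro: smult_closed\<close>)
  also have "(\<Oplus>\<^bsub>M\<^esub> c\<in>S. a' c \<odot>\<^bsub>M\<^esub> c) = u \<odot>\<^bsub>M\<^esub> b"
    unfolding comb by (rule M.finsum_cong') (use S b SM in \<open>auto simp: a'_def Pi_iff subset_iff\<close>)
  also have "a' b \<odot>\<^bsub>M\<^esub> b = \<ominus>\<^bsub>M\<^esub> (u \<odot>\<^bsub>M\<^esub> b)"
    using smult_l_minus[OF u bM] by (simp add: a'_def)
  finally have sum_zero: "(\<Oplus>\<^bsub>M\<^esub> c\<in>insert b S. a' c \<odot>\<^bsub>M\<^esub> c) = \<zero>\<^bsub>M\<^esub>"
    using M.l_neg smult_closed[OF u bM] by simp
  have "a' b = \<zero>"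
    by (rule lin_indep_coeff_eq_zero[OF li _ _ a' sum_zero]) (use S b in auto)
  then have "\<ominus> u = \<zero>"
    by (simp add: a'_def)
  then show "u = \<zero>"
    using R.add.inv_inv[OF u] by simp
qed

end

text \<open>Positive measure of the A k, not finiteness of M, is what makes 1_(A k) nonzero; this is
  why the main theorem does not use its hypothesis prob_space M.\<close>

lemma L0_stable_imp_basis_finite:
  assumes E: "module (L0 M) E" and stable: "L0_stable M E" and B: "is_basis (L0 M) E B"
    and A: "meas_partition M A" and pos: "\<And>k. measure M (A k) > 0"
  shows "finite B"
proof (rule ccontr)
  interpret E: module "L0 M" E by (fact E)
  assume "infinite B"
  then obtain b :: "nat \<Rightarrow> _" where b: "inj b" "range b \<subseteq> B"
    using infinite_countable_subset by blast
  have BE: "B \<subseteq> carrier E"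
    using B by (simp add: is_basis_def)
  then have "\<exists>!y. y \<in> carrier E \<and> (\<forall>k. L0_ind M (A k) \<odot>\<^bsub>E\<^esub> y = L0_ind M (A k) \<odot>\<^bsub>E\<^esub> b k)"
    using A b(2) by (intro stable[unfolded L0_stable_def, rule_format]) auto
  then obtain y where y: "y \<in> carrier E"
    and y_on_A: "\<And>k. L0_ind M (A k) \<odot>\<^bsub>E\<^esub> y = L0_ind M (A k) \<odot>\<^bsub>E\<^esub> b k"
    by (meson ex1_implies_ex)
  obtain S a where S: "finite S" "S \<subseteq> B" "a \<in> S \<rightarrow> carrier (L0 M)"
    and y_comb: "y = (\<Oplus>\<^bsub>E\<^esub> c\<in>S. a c \<odot>\<^bsub>E\<^esub> c)"
    using B y unfolding is_basis_def spans_def by meson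
  obtain k where k: "b k \<notin> S"
    using S(1) b(1) finite_subset[of "range b" S] by (auto simp: finite_image_iff)
  have A_k: "A k \<in> sets M"
    using A by (simp add: meas_partition_def)
  note u = L0_ind_in_carrier[OF A_k]
  have "L0_ind M (A k) \<odot>\<^bsub>E\<^esub> b k = (\<Oplus>\<^bsub>E\<^esub> c\<in>S. (L0_ind M (A k) \<otimes>\<^bsub>L0 M\<^esub> a c) \<odot>\<^bsub>E\<^esub> c)"
    using y_on_A[of k] E.smult_finsum_lincomb[OF S(1) _ S(3) u] S(2) BE y_comb by auto
  then have "L0_ind M (A k) = \<zero>\<^bsub>L0 M\<^esub>"
    using B b(2) S k u
    by (intro E.lin_indep_smult_in_span_eq_zero[of B S _ "b k"]) (auto simp: is_basis_def)
  moreover have "emeasure M (A k) \<noteq> 0"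
    using pos[of k] by (auto simp: measure_def)
  ultimately show False
    using L0_ind_neq_zero[OF A_k] by blast
qed

lemma finite_basis_locally_zero_imp_zero:
  assumes E: "module (L0 M) E" and B: "is_basis (L0 M) E B" "finite B"
    and A: "meas_partition M A" and z: "z \<in> carrier E"
    and local_zero: "\<And>k. L0_ind M (A k) \<odot>\<^bsub>E\<^esub> z = \<zero>\<^bsub>E\<^esub>"
  shows "z = \<zero>\<^bsub>E\<^esub>"
proof -
  interpret E: module "L0 M" E by (fact E)
  have BE: "B \<subseteq> carrier E" and li: "lin_indep (L0 M) E B"
    using B by (auto simp: is_basis_def)
  obtain e where e: "e \<in> B \<rightarrow> carrier (L0 M)" and z_comb: "z = (\<Oplus>\<^bsub>E\<^esub> c\<in>B. e c \<odot>\<^bsub>E\<^esub> c)"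
    using E.spans_finite_coeffs[OF B(2) BE _ z] B(1) unfolding is_basis_def by blast
  have A_sets: "A k \<in> sets M" for k
    using A by (simp add: meas_partition_def)
  have "e c = \<zero>\<^bsub>L0 M\<^esub>" if c: "c \<in> B" for c
  proof (rule L0_eq_zero_if_locally_zero[OF A])
    show "e c \<in> carrier (L0 M)"
      using e c by auto
    fix k
    note u = L0_ind_in_carrier[OF A_sets[of k]]
    have "(\<Oplus>\<^bsub>E\<^esub> c\<in>B. (L0_ind M (A k) \<otimes>\<^bsub>L0 M\<^esub> e c) \<odot>\<^bsub>E\<^esub> c) = \<zero>\<^bsub>E\<^esub>"
      using local_zero[of k] E.smult_finsum_lincomb[OF B(2) BE e u] z_comb by simp
    moreover have "(\<lambda>c. L0_ind M (A k) \<otimes>\<^bsub>L0 M\<^esub> e c) \<in> B \<rightarrow> carrier (L0 M)"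
      using e u by (auto simp: Pi_iff)
    ultimately show "L0_ind M (A k) \<otimes>\<^bsub>L0 M\<^esub> e c = \<zero>\<^bsub>L0 M\<^esub>"
      using E.lin_indep_coeff_eq_zero[OF li B(2) subset_refl _ _ c] by blast
  qed
  then have "z = (\<Oplus>\<^bsub>E\<^esub> c\<in>B. \<zero>\<^bsub>E\<^esub>)"
    unfolding z_comb by (intro E.finsum_cong') (use BE in auto)
  then show ?thesis by simp
qed

lemma finite_basis_imp_L0_stable:
  assumes E: "module (L0 M) E" and B: "is_basis (L0 M) E B" "finite B"
  shows "L0_stable M E"
  unfolding L0_stable_def
proof (intro allI impI, elim conjE)
  interpret E: module "L0 M" E by (fact E)
  fix A and x :: "nat \<Rightarrow> _"
  assume A: "meas_partition M A" and x: "\<forall>k. x k \<in> carrier E"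
  have BE: "B \<subseteq> carrier E" and sp: "spans (L0 M) E B"
    using B by (auto simp: is_basis_def)
  have A_sets: "A k \<in> sets M" for k
    using A by (simp add: meas_partition_def)
  have "\<forall>k. \<exists>a. a \<in> B \<rightarrow> carrier (L0 M) \<and> x k = (\<Oplus>\<^bsub>E\<^esub> c\<in>B. a c \<odot>\<^bsub>E\<^esub> c)"
    using E.spans_finite_coeffs[OF B(2) BE sp] x by blast
  then obtain a where a: "\<And>k. a k \<in> B \<rightarrow> carrier (L0 M)"
    and x_comb: "\<And>k. x k = (\<Oplus>\<^bsub>E\<^esub> c\<in>B. a k c \<odot>\<^bsub>E\<^esub> c)"
    by metis
  have "\<forall>c\<in>B. \<exists>g. g \<in> carrier (L0 M) \<and> (\<forall>k. L0_ind M (A k) \<otimes>\<^bsub>L0 M\<^esub> g = L0_ind M (A k) \<otimes>\<^bsub>L0 M\<^esub> a k c)"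
  proof
    fix c assume "c \<in> B"
    then have "\<exists>g\<in>carrier (L0 M). \<forall>k. L0_ind M (A k) \<otimes>\<^bsub>L0 M\<^esub> g = L0_ind M (A k) \<otimes>\<^bsub>L0 M\<^esub> a k c"
      using a by (intro L0_countable_gluing[OF A]) auto
    then show "\<exists>g. g \<in> carrier (L0 M) \<and> (\<forall>k. L0_ind M (A k) \<otimes>\<^bsub>L0 M\<^esub> g = L0_ind M (A k) \<otimes>\<^bsub>L0 M\<^esub> a k c)"
      by blast
  qed
  from bchoice[OF this] obtain g where g_all: "\<forall>c\<in>B. g c \<in> carrier (L0 M) \<and>
      (\<forall>k. L0_ind M (A k) \<otimes>\<^bsub>L0 M\<^esub> g c = L0_ind M (A k) \<otimes>\<^bsub>L0 M\<^esub> a k c)"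
    by blast
  then have g: "g \<in> B \<rightarrow> carrier (L0 M)"
    and g_on_A: "\<And>c k. c \<in> B \<Longrightarrow> L0_ind M (A k) \<otimes>\<^bsub>L0 M\<^esub> g c = L0_ind M (A k) \<otimes>\<^bsub>L0 M\<^esub> a k c"
    by auto
  define y where "y = (\<Oplus>\<^bsub>E\<^esub> c\<in>B. g c \<odot>\<^bsub>E\<^esub> c)"
  have y: "y \<in> carrier E"
    unfolding y_def using g BE by (auto intro!: E.finsum_closed)
  have y_on_A: "L0_ind M (A k) \<odot>\<^bsub>E\<^esub> y = L0_ind M (A k) \<odot>\<^bsub>E\<^esub> x k" for k
  proof -
    note u = L0_ind_in_carrier[OF A_sets[of k]]
    have "L0_ind M (A k) \<odot>\<^bsub>E\<^esub> y = (\<Oplus>\<^bsub>E\<^esub> c\<in>B. (L0_ind M (A k) \<otimes>\<^bsub>L0 M\<^esub> g c) \<odot>\<^bsub>E\<^esub> c)"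
      unfolding y_def by (rule E.smult_finsum_lincomb[OF B(2) BE g u])
    also have "\<dots> = (\<Oplus>\<^bsub>E\<^esub> c\<in>B. (L0_ind M (A k) \<otimes>\<^bsub>L0 M\<^esub> a k c) \<odot>\<^bsub>E\<^esub> c)"
      by (rule E.finsum_cong') (use g_on_A a BE u in \<open>auto intro!: E.smult_closed simp: Pi_iff subset_iff\<close>)
    also have "\<dots> = L0_ind M (A k) \<odot>\<^bsub>E\<^esub> x k"
      unfolding x_comb by (rule E.smult_finsum_lincomb[OF B(2) BE a u, symmetric])
    finally show ?thesis .
  qed
  have "w = y" if w: "w \<in> carrier E" and w_on_A: "\<forall>k. L0_ind M (A k) \<odot>\<^bsub>E\<^esub> w = L0_ind M (A k) \<odot>\<^bsub>E\<^esub> x k" for w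
  proof -
    have "L0_ind M (A k) \<odot>\<^bsub>E\<^esub> (w \<ominus>\<^bsub>E\<^esub> y) = \<zero>\<^bsub>E\<^esub>" for k
      using w_on_A y_on_A[of k] w y x L0_ind_in_carrier[OF A_sets[of k]]
      by (simp add: E.minus_eq E.smult_r_distr E.smult_r_minus E.r_neg E.smult_closed)
    then have "w \<ominus>\<^bsub>E\<^esub> y = \<zero>\<^bsub>E\<^esub>"
      using finite_basis_locally_zero_imp_zero[OF E B A] w y by simp
    moreover have "w = (w \<ominus>\<^bsub>E\<^esub> y) \<oplus>\<^bsub>E\<^esub> y"
      using w y by (simp add: E.minus_eq E.a_assoc E.l_neg)
    ultimately show "w = y"
      using y by simp
  qed
  with y y_on_A show "\<exists>!y. y \<in> carrier E \<and> (\<forall>k. L0_ind M (A k) \<odot>\<^bsub>E\<^esub> y = L0_ind M (A k) \<odot>\<^bsub>E\<^esub> x k)"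
    by blast
qed

theorem proposition3p2:
  fixes M :: "'a measure" and E :: "(('a \<Rightarrow> real) set, 'e, 'd) module_scheme"
  assumes "prob_space M"
    and "\<exists>A. meas_partition M A \<and> (\<forall>k. measure M (A k) > 0)"
    and "module (L0 M) E"
    and "free_module (L0 M) E"
  shows "L0_stable M E \<longleftrightarrow> finite_rank (L0 M) E"
proof
  assume "L0_stable M E"
  moreover obtain B where "is_basis (L0 M) E B"
    using assms(4) unfolding free_module_def by blast
  moreover obtain A where "meas_partition M A" "\<forall>k. measure M (A k) > 0"
    using assms(2) by blast
  ultimately show "finite_rank (L0 M) E"
    using L0_stable_imp_basis_finite[OF assms(3)] unfolding finite_rank_def by blast
next
  assume "finite_rank (L0 M) E"
  then show "L0_stable M E"
    using finite_basis_imp_L0_stable[OF assms(3)] unfolding finite_rank_def by blast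
qed

end
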